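(* Let $\eta>0$, $\theta>0$ with $(\eta,\theta)\in\mathcal{R}$, and let $\delta_*=\frac{u_m^2}{u_m^2+\eta}$ be the value of $\delta$ for which the interior equilibrium passes through the fold point $P=(u_m,v_m)$. Assume $f(u_m,v_m)=0,\ g(u_m,v_m,\delta_* )=0,\ \frac{\partial f}{\partial u}(u_m,v_m)=0$, and $\frac{\partial f}{\partial v}(u_m,v_m)\neq0,\ \frac{\partial^2 f}{\partial u^2}(u_m,v_m)\neq0,\ \frac{\partial g}{\partial u}(u_m,v_m,\delta_* )\neq0,\ \frac{\partial g}{\partial \delta}(u_m,v_m,\delta_* )\neq0.$ Then there exist $\epsilon_0>0$ and $\delta_0>0$ such that for $0<\epsilon<\epsilon_0$ and $|\delta-\delta_*|<\delta_0$ the system $$\frac{du}{dt}=f(u,v),\qquad \frac{dv}{dt}=\epsilon\, g(u,v,\delta)$$ has an equilibrium $P_2$ in a neighbourhood of $P$ which converges to $P$ as $(\epsilon,\delta)\to(0,\delta_* )$. The system undergoes a singular Hopf bifurcation at $$\delta_H(\sqrt{\epsilon})=\delta_*+\mathcal{O}(\epsilon^{5/2}).$$ This Hopf bifurcation is non-degenerate when $A\neq0$; it is supercritical if $A<0$ and subcritical if $A>0$, where $$A=a_{01}a_{20}b_{20}-a_{01}a_{30}b_{10}+a_{11}a_{20}b_{10}.$$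
   Context: The system is $f(u,v)=u(1-u)(u+\theta)(u^2+\eta)-u^2v$ and $g(u,v,\delta)=u^2v-\delta v(u^2+\eta)$, with parameters $\delta,\theta,\eta>0$ and $0<\epsilon\ll1$. It is considered on the first quadrant. Let $\phi(u)=\frac{1}{u}(1-u)(u+\theta)(u^2+\eta)$ for $u>0$. The critical manifold is $M_{20}=\{(u,v):u>0,\ v=\phi(u)\}$. Let $\Gamma=9\theta^2+6\theta+9-24\eta$ and $\Lambda_1=\frac{\eta}{8}\big(\theta^2+\frac{22}{3}\theta+1\big)-\frac{1}{96}\big(3(1+\theta^4)+2(\theta^2+4\eta^2)\big)$, $\Lambda_2=\frac{1-\theta}{288}(3\theta^2+2\theta+3-8\eta)$. Define - $\mathcal{R}_1=\{(\eta,\theta):0<\eta<\theta\le1,\ \frac{\sqrt\Gamma}{3}-3<\theta<1+\frac{\sqrt\Gamma}{3},\ \Gamma>(\Lambda_1/\Lambda_2)^2\}$, - $\mathcal{R}_2=\{(\eta,\theta):0<\eta<1<\theta,\ \frac{\sqrt\Gamma}{3}-3<\theta<1+\frac{\sqrt\Gamma}{3},\ \Gamma<(\Lambda_1/\Lambda_2)^2\}$, - $\mathcal{R}_3=\{(\eta,\theta):0<\theta<1<\eta,\ \frac{\sqrt\Gamma}{3}-3<\theta<1,\ \Gamma>(\Lambda_1/\Lambda_2)^2\}$, and $\mathcal{R}=\mathcal{R}_1\cup\mathcal{R}_2\cup\mathcal{R}_3$. For $(\eta,\theta)\in\mathcal{R}$, $M_{20}$ is S-shaped with exactly two fold points. These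 are $P=(u_m,v_m)$, a local minimum of $\phi$, and $Q=(u_M,v_M)$, a local maximum of $\phi$, with $0<u_m<u_M<1$, $v_m=\phi(u_m)$ and $v_M=\phi(u_M)$. The interior equilibrium is $E_*=(u_*,v_* )$ with $u_*=\sqrt{\delta\eta/(1-\delta)}$ and $v_*=\phi(u_* )$. Notation: $a_{ij}=\frac{\partial^{i+j}f}{\partial u^i\partial v^j}(u_m,v_m)$ and $b_{ij}=\frac{\partial^{i+j}g}{\partial u^i\partial v^j}(u_m,v_m,\delta_* )$. A singular Hopf bifurcation is a Hopf bifurcation of an equilibrium near a fold point of the critical manifold at which the eigenvalues of the Jacobian become singular in the limit $\epsilon\to0$. *)

theory Defs
  imports "HOL-Analysis.Analysis" "HOL-Library.Landau_Symbols"
begin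

definition fm :: "real \<Rightarrow> real \<Rightarrow> real \<Rightarrow> real \<Rightarrow> real" where
  "fm \<theta> \<eta> u v = u * (1 - u) * (u + \<theta>) * (u^2 + \<eta>) - u^2 * v"

definition gm :: "real \<Rightarrow> real \<Rightarrow> real \<Rightarrow> real \<Rightarrow> real" where
  "gm \<eta> u v \<delta> = u^2 * v - \<delta> * v * (u^2 + \<eta>)"

definition field :: "real \<Rightarrow> real \<Rightarrow> real \<Rightarrow> real \<Rightarrow> real \<Rightarrow> real \<Rightarrow> real \<times> real" where
  "field \<theta> \<eta> \<epsilon> \<delta> u v = (fm \<theta> \<eta> u v, \<epsilon> * gm \<eta> u v \<delta>)"

definition phi :: "real \<Rightarrow> real \<Rightarrow> real \<Rightarrow> real" where
  "phi \<theta> \<eta> u = (1 / u) * (1 - u) * (u + \<theta>) * (u^2 + \<eta>)"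

text \<open>The fold point P: the local minimum of phi on (0,1) (the lower fold of M20).\<close>
definition u_m :: "real \<Rightarrow> real \<Rightarrow> real" where
  "u_m \<theta> \<eta> = (THE u. 0 < u \<and> u < 1 \<and> deriv (phi \<theta> \<eta>) u = 0 \<and>
      (\<exists>r>0. \<forall>x. 0 < x \<and> \<bar>x - u\<bar> < r \<longrightarrow> phi \<theta> \<eta> u \<le> phi \<theta> \<eta> x))"

definition v_m :: "real \<Rightarrow> real \<Rightarrow> real" where
  "v_m \<theta> \<eta> = phi \<theta> \<eta> (u_m \<theta> \<eta>)"

definition Gam :: "real \<Rightarrow> real \<Rightarrow> real" where
  "Gam \<eta> \<theta> = 9*\<theta>^2 + 6*\<theta> + 9 - 24*\<eta>"

definition Lam1 :: "real \<Rightarrow> real \<Rightarrow> real" where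
  "Lam1 \<eta> \<theta> = \<eta>/8 * (\<theta>^2 + 22/3*\<theta> + 1) - 1/96 * (3*(1 + \<theta>^4) + 2*(\<theta>^2 + 4*\<eta>^2))"

definition Lam2 :: "real \<Rightarrow> real \<Rightarrow> real" where
  "Lam2 \<eta> \<theta> = (1 - \<theta>)/288 * (3*\<theta>^2 + 2*\<theta> + 3 - 8*\<eta>)"

definition R1 :: "(real \<times> real) set" where
  "R1 = {(\<eta>,\<theta>). 0 < \<eta> \<and> \<eta> < \<theta> \<and> \<theta> \<le> 1 \<and>
      sqrt (Gam \<eta> \<theta>)/3 - 3 < \<theta> \<and> \<theta> < 1 + sqrt (Gam \<eta> \<theta>)/3 \<and>
      Lam2 \<eta> \<theta> \<noteq> 0 \<and> Gam \<eta> \<theta> > (Lam1 \<eta> \<theta> / Lam2 \<eta> \<theta>)^2}"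

definition R2 :: "(real \<times> real) set" where
  "R2 = {(\<eta>,\<theta>). 0 < \<eta> \<and> \<eta> < 1 \<and> 1 < \<theta> \<and>
      sqrt (Gam \<eta> \<theta>)/3 - 3 < \<theta> \<and> \<theta> < 1 + sqrt (Gam \<eta> \<theta>)/3 \<and>
      Lam2 \<eta> \<theta> \<noteq> 0 \<and> Gam \<eta> \<theta> < (Lam1 \<eta> \<theta> / Lam2 \<eta> \<theta>)^2}"

definition R3 :: "(real \<times> real) set" where
  "R3 = {(\<eta>,\<theta>). 0 < \<theta> \<and> \<theta> < 1 \<and> 1 < \<eta> \<and>
      sqrt (Gam \<eta> \<theta>)/3 - 3 < \<theta> \<and> \<theta> < 1 \<and>
      Lam2 \<eta> \<theta> \<noteq> 0 \<and> Gam \<eta> \<theta> > (Lam1 \<eta> \<theta> / Lam2 \<eta> \<theta>)^2}"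

definition Rreg :: "(real \<times> real) set" where
  "Rreg = R1 \<union> R2 \<union> R3"

definition pd :: "nat \<Rightarrow> (real \<Rightarrow> real \<Rightarrow> real) \<Rightarrow> real \<Rightarrow> real \<Rightarrow> real" where
  "pd j h = (if j = 0 then (\<lambda>u v. deriv (\<lambda>x. h x v) u) else (\<lambda>u v. deriv (\<lambda>y. h u y) v))"

definition comp :: "(real \<Rightarrow> real \<Rightarrow> real \<times> real) \<Rightarrow> nat \<Rightarrow> real \<Rightarrow> real \<Rightarrow> real" where
  "comp F i = (\<lambda>u v. if i = 0 then fst (F u v) else snd (F u v))"

definition jac :: "(real \<Rightarrow> real \<Rightarrow> real \<times> real) \<Rightarrow> real \<times> real \<Rightarrow> nat \<Rightarrow> nat \<Rightarrow> real" where
  "jac F x i j = pd j (comp F i) (fst x) (snd x)"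

definition jtrace :: "(real \<Rightarrow> real \<Rightarrow> real \<times> real) \<Rightarrow> real \<times> real \<Rightarrow> real" where
  "jtrace F x = jac F x 0 0 + jac F x 1 1"

definition jdet :: "(real \<Rightarrow> real \<Rightarrow> real \<times> real) \<Rightarrow> real \<times> real \<Rightarrow> real" where
  "jdet F x = jac F x 0 0 * jac F x 1 1 - jac F x 0 1 * jac F x 1 0"

text \<open>Imaginary part omega of the eigenvalues +-i omega at a Hopf point (trace 0, det > 0).\<close>
definition hopf_freq :: "(real \<Rightarrow> real \<Rightarrow> real \<times> real) \<Rightarrow> real \<times> real \<Rightarrow> real" where
  "hopf_freq F x = sqrt (jdet F x)"

text \<open>A one-parameter family F mu of planar fields with an equilibrium branch x mu undergoes
  a Hopf bifurcation at mu0: equilibria near mu0, a pair of purely imaginary nonzero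
  eigenvalues at mu0, and the real part of the eigenvalues (= trace/2) crosses zero with
  nonzero speed.\<close>
definition hopf_point :: "(real \<Rightarrow> real \<Rightarrow> real \<Rightarrow> real \<times> real) \<Rightarrow> (real \<Rightarrow> real \<times> real) \<Rightarrow> real \<Rightarrow> bool" where
  "hopf_point F x \<mu>0 \<longleftrightarrow>
     (\<exists>r>0. \<forall>\<mu>. \<bar>\<mu> - \<mu>0\<bar> < r \<longrightarrow> F \<mu> (fst (x \<mu>)) (snd (x \<mu>)) = (0, 0)) \<and>
     jtrace (F \<mu>0) (x \<mu>0) = 0 \<and> jdet (F \<mu>0) (x \<mu>0) > 0 \<and>
     (\<exists>d. d \<noteq> 0 \<and> ((\<lambda>\<mu>. jtrace (F \<mu>) (x \<mu>)) has_real_derivative d) (at \<mu>0))"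

definition cinner :: "(nat \<Rightarrow> complex) \<Rightarrow> (nat \<Rightarrow> complex) \<Rightarrow> complex" where
  "cinner p q = (\<Sum>j<2. cnj (p j) * q j)"

definition cmatvec :: "(nat \<Rightarrow> nat \<Rightarrow> complex) \<Rightarrow> (nat \<Rightarrow> complex) \<Rightarrow> nat \<Rightarrow> complex" where
  "cmatvec M z = (\<lambda>i. \<Sum>j<2. M i j * z j)"

definition csolve :: "(nat \<Rightarrow> nat \<Rightarrow> complex) \<Rightarrow> (nat \<Rightarrow> complex) \<Rightarrow> nat \<Rightarrow> complex" where
  "csolve M z = (let D = M 0 0 * M 1 1 - M 0 1 * M 1 0 in
     (\<lambda>i. if i = 0 then (M 1 1 * z 0 - M 0 1 * z 1) / D else (M 0 0 * z 1 - M 1 0 * z 0) / D))"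

definition Bform :: "(real \<Rightarrow> real \<Rightarrow> real \<times> real) \<Rightarrow> real \<times> real \<Rightarrow> (nat \<Rightarrow> complex) \<Rightarrow> (nat \<Rightarrow> complex) \<Rightarrow> nat \<Rightarrow> complex" where
  "Bform F x a b = (\<lambda>i. \<Sum>j<2. \<Sum>k<2.
      of_real (pd j (pd k (comp F i)) (fst x) (snd x)) * a j * b k)"

definition Cform :: "(real \<Rightarrow> real \<Rightarrow> real \<times> real) \<Rightarrow> real \<times> real \<Rightarrow> (nat \<Rightarrow> complex) \<Rightarrow> (nat \<Rightarrow> complex) \<Rightarrow> (nat \<Rightarrow> complex) \<Rightarrow> nat \<Rightarrow> complex" where
  "Cform F x a b c = (\<lambda>i. \<Sum>j<2. \<Sum>k<2. \<Sum>l<2.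
      of_real (pd j (pd k (pd l (comp F i))) (fst x) (snd x)) * a j * b k * c l)"

text \<open>First Lyapunov coefficient (Kuznetsov, Elements of Applied Bifurcation Theory, (3.20)) of the
  planar field F at an equilibrium x with eigenvalues +-i omega, omega > 0; q, p are normalised
  by <q,q> = 1, <p,q> = 1 (then l1 does not depend on the remaining choice).\<close>
definition lyap1 :: "(real \<Rightarrow> real \<Rightarrow> real \<times> real) \<Rightarrow> real \<times> real \<Rightarrow> real" where
  "lyap1 F x = (let
      \<omega> = hopf_freq F x;
      A = (\<lambda>i j. complex_of_real (jac F x i j));
      AT = (\<lambda>i j. A j i);
      (q, p) = (SOME (q, p). cmatvec A q = (\<lambda>i. \<i> * of_real \<omega> * q i) \<and>
                            cmatvec AT p = (\<lambda>i. - \<i> * of_real \<omega> * p i) \<and>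
                            cinner q q = 1 \<and> cinner p q = 1);
      qb = (\<lambda>i. cnj (q i));
      M2 = (\<lambda>i j. (if i = j then 2 * \<i> * of_real \<omega> else 0) - A i j)
    in Re (cinner p (Cform F x q q qb)
           - 2 * cinner p (Bform F x q (csolve A (Bform F x q qb)))
           + cinner p (Bform F x qb (csolve M2 (Bform F x q q)))) / (2 * \<omega>))"

definition delta_star :: "real \<Rightarrow> real \<Rightarrow> real" where
  "delta_star \<theta> \<eta> = (u_m \<theta> \<eta>)^2 / ((u_m \<theta> \<eta>)^2 + \<eta>)"

text \<open>a_ij = d^(i+j) f / du^i dv^j (u_m, v_m), b_ij likewise for g(., ., delta_star).\<close>
definition pdn :: "nat \<Rightarrow> nat \<Rightarrow> (real \<Rightarrow> real \<Rightarrow> real) \<Rightarrow> real \<Rightarrow> real \<Rightarrow> real" where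
  "pdn i j h = ((pd 0) ^^ i) (((pd 1) ^^ j) h)"

definition acoef :: "real \<Rightarrow> real \<Rightarrow> nat \<Rightarrow> nat \<Rightarrow> real" where
  "acoef \<theta> \<eta> i j = pdn i j (fm \<theta> \<eta>) (u_m \<theta> \<eta>) (v_m \<theta> \<eta>)"

definition bcoef :: "real \<Rightarrow> real \<Rightarrow> nat \<Rightarrow> nat \<Rightarrow> real" where
  "bcoef \<theta> \<eta> i j = pdn i j (\<lambda>u v. gm \<eta> u v (delta_star \<theta> \<eta>)) (u_m \<theta> \<eta>) (v_m \<theta> \<eta>)"

definition Acoef :: "real \<Rightarrow> real \<Rightarrow> real" where
  "Acoef \<theta> \<eta> = acoef \<theta> \<eta> 0 1 * acoef \<theta> \<eta> 2 0 * bcoef \<theta> \<eta> 2 0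
              - acoef \<theta> \<eta> 0 1 * acoef \<theta> \<eta> 3 0 * bcoef \<theta> \<eta> 1 0
              + acoef \<theta> \<eta> 1 1 * acoef \<theta> \<eta> 2 0 * bcoef \<theta> \<eta> 1 0"

end

theory Submission
  imports Defs "HOL-Computational_Algebra.Polynomial"
begin

(* Every interior equilibrium (u, \<phi> u), (1 - \<delta>) u^2 = \<delta> \<eta>, lies on M20, and since
   g = v ((1 - \<delta>) u^2 - \<delta> \<eta>) its v-derivative vanishes there. So the trace of the Jacobian at
   the equilibrium is f_u(u, \<phi> u) = u^2 \<phi>'(u), independent of \<epsilon>; it vanishes exactly when the
   equilibrium sits at the fold u_m, i.e. at \<delta> = \<delta>*. Hence \<delta>_H = \<delta>* for every \<epsilon>, and along
   the branch the trace crosses zero with speed a20 du*/d\<delta> \<noteq> 0. At the fold the Jacobian is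
   antidiagonal, [[0, a01], [\<epsilon> b10, 0]], with eigenvalues \<plusminus>i sqrt(\<epsilon> u_m^2 b10) tending to 0
   with \<epsilon>: the Hopf bifurcation is singular. For an antidiagonal linear part and components affine
   in v, Kuznetsov's formula evaluates to l1 = A / (4 b10 (u_m^2 + \<epsilon> b10) \<omega>): the terms in
   b21 and b11 cancel because g is v times a function of u. So l1 has the sign of A. *)

lemma sum_lessThan_2: "(\<Sum>j<(2::nat). f j) = f 0 + f 1"
  by (simp add: numeral_2_eq_2)

section \<open>The first Lyapunov coefficient at an antidiagonal linear part\<close>

definition antidiag :: "real \<Rightarrow> real \<Rightarrow> nat \<Rightarrow> nat \<Rightarrow> real" where
  "antidiag \<alpha> \<gamma> i j = (if i = 0 then (if j = 0 then 0 else \<alpha>) else (if j = 0 then \<gamma> else 0))"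

(* The second-derivative form of a planar field whose components are affine in v, so that all
   vv-derivatives vanish: f20 = f_uu and f11 = f_uv for the first component, g20, g11 for the
   second; affine_v_trilin likewise for the third derivatives. *)
definition affine_v_bilin ::
    "real \<Rightarrow> real \<Rightarrow> real \<Rightarrow> real \<Rightarrow> (nat \<Rightarrow> complex) \<Rightarrow> (nat \<Rightarrow> complex) \<Rightarrow> nat \<Rightarrow> complex" where
  "affine_v_bilin f20 f11 g20 g11 y z i =
     (if i = 0 then of_real f20 * y 0 * z 0 + of_real f11 * (y 0 * z 1 + y 1 * z 0)
      else of_real g20 * y 0 * z 0 + of_real g11 * (y 0 * z 1 + y 1 * z 0))"

definition affine_v_trilin :: "real \<Rightarrow> real \<Rightarrow> real \<Rightarrow> real \<Rightarrow>
    (nat \<Rightarrow> complex) \<Rightarrow> (nat \<Rightarrow> complex) \<Rightarrow> (nat \<Rightarrow> complex) \<Rightarrow> nat \<Rightarrow> complex" where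
  "affine_v_trilin f30 f21 g30 g21 x y z i =
     (if i = 0
      then of_real f30 * x 0 * y 0 * z 0 + of_real f21 * (x 0 * y 0 * z 1 + x 0 * y 1 * z 0 + x 1 * y 0 * z 0)
      else of_real g30 * x 0 * y 0 * z 0 + of_real g21 * (x 0 * y 0 * z 1 + x 0 * y 1 * z 0 + x 1 * y 0 * z 0))"

definition lyap_numerator ::
    "(nat \<Rightarrow> nat \<Rightarrow> complex) \<Rightarrow> real \<Rightarrow>
     ((nat \<Rightarrow> complex) \<Rightarrow> (nat \<Rightarrow> complex) \<Rightarrow> nat \<Rightarrow> complex) \<Rightarrow>
     ((nat \<Rightarrow> complex) \<Rightarrow> (nat \<Rightarrow> complex) \<Rightarrow> (nat \<Rightarrow> complex) \<Rightarrow> nat \<Rightarrow> complex) \<Rightarrow>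
     (nat \<Rightarrow> complex) \<Rightarrow> (nat \<Rightarrow> complex) \<Rightarrow> complex" where
  "lyap_numerator A \<omega> B C q p =
     cinner p (C q q (\<lambda>i. cnj (q i)))
     - 2 * cinner p (B q (csolve A (B q (\<lambda>i. cnj (q i)))))
     + cinner p (B (\<lambda>i. cnj (q i))
         (csolve (\<lambda>i j. (if i = j then 2 * \<i> * of_real \<omega> else 0) - A i j) (B q q)))"

definition normalised_eigenpair ::
    "(nat \<Rightarrow> nat \<Rightarrow> complex) \<Rightarrow> real \<Rightarrow> (nat \<Rightarrow> complex) \<Rightarrow> (nat \<Rightarrow> complex) \<Rightarrow> bool" where
  "normalised_eigenpair A \<omega> q p \<longleftrightarrow>
     cmatvec A q = (\<lambda>i. \<i> * of_real \<omega> * q i) \<and> cmatvec (\<lambda>i j. A j i) p = (\<lambda>i. - \<i> * of_real \<omega> * p i) \<and>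
     cinner q q = 1 \<and> cinner p q = 1"

(* lyap1 picks its eigenvectors by SOME, so its value is pinned down by evaluating the bracket at
   every admissible pair. *)
lemma lyap1_eqI:
  assumes "\<exists>q p. normalised_eigenpair (\<lambda>i j. of_real (jac F x i j)) (hopf_freq F x) q p"
    and "\<And>q p. normalised_eigenpair (\<lambda>i j. of_real (jac F x i j)) (hopf_freq F x) q p \<Longrightarrow>
           Re (lyap_numerator (\<lambda>i j. of_real (jac F x i j)) (hopf_freq F x) (Bform F x) (Cform F x) q p) = N"
  shows "lyap1 F x = N / (2 * hopf_freq F x)"
proof -
  let ?E = "normalised_eigenpair (\<lambda>i j. of_real (jac F x i j)) (hopf_freq F x)"
  obtain q p where qp: "(SOME (q, p). ?E q p) = (q, p)"
    by (cases "SOME (q, p). ?E q p") simp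
  have "?E q p"
    using someI_ex[of "\<lambda>(q, p). ?E q p"] assms(1) qp by auto
  moreover have "lyap1 F x = Re (lyap_numerator (\<lambda>i j. of_real (jac F x i j)) (hopf_freq F x)
      (Bform F x) (Cform F x) q p) / (2 * hopf_freq F x)"
    using qp unfolding lyap1_def Let_def lyap_numerator_def normalised_eigenpair_def by simp
  ultimately show ?thesis
    using assms(2) by simp
qed

lemma csolve_antidiag:
  assumes "\<alpha> \<noteq> 0" "\<gamma> \<noteq> 0"
  shows "csolve (\<lambda>i j. of_real (antidiag \<alpha> \<gamma> i j)) z = (\<lambda>i. if i = 0 then z 1 / of_real \<gamma> else z 0 / of_real \<alpha>)"
  using assms by (auto simp: csolve_def antidiag_def Let_def fun_eq_iff field_simps)

lemma csolve_shifted_antidiag: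
  "csolve (\<lambda>i j. (if i = j then 2 * \<i> * of_real \<omega> else 0) - of_real (antidiag \<alpha> \<gamma> i j)) z =
    (\<lambda>i. if i = 0 then (2 * \<i> * of_real \<omega> * z 0 + of_real \<alpha> * z 1) / of_real (- 4 * \<omega>^2 - \<alpha> * \<gamma>)
         else (2 * \<i> * of_real \<omega> * z 1 + of_real \<gamma> * z 0) / of_real (- 4 * \<omega>^2 - \<alpha> * \<gamma>))"
  by (auto simp: csolve_def antidiag_def Let_def fun_eq_iff algebra_simps power2_eq_square)

(* The bracket is conjugate-linear in p and cubic in (q, q, conj q), and an eigenvector of an
   antidiagonal matrix is fixed by its first coordinate. *)
lemma lyap_numerator_antidiag_homogeneous:
  fixes \<alpha> \<gamma> \<omega> f20 f11 g20 g11 f30 f21 g30 g21 :: real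
  assumes "\<alpha> \<noteq> 0" "\<gamma> \<noteq> 0" "4 * \<omega>^2 + \<alpha> * \<gamma> \<noteq> 0"
    and q: "q 1 = \<i> * \<omega> * q 0 / \<alpha>" and p: "p 1 = - \<i> * \<omega> * p 0 / \<gamma>"
  defines "N \<equiv> lyap_numerator (\<lambda>i j. of_real (antidiag \<alpha> \<gamma> i j)) \<omega>
                 (affine_v_bilin f20 f11 g20 g11) (affine_v_trilin f30 f21 g30 g21)"
  shows "N q p = cnj (p 0) * q 0 ^ 2 * cnj (q 0) / (\<gamma> * \<alpha>^3) *
           N (\<lambda>i. if i = 0 then \<alpha> else \<i> * \<omega>) (\<lambda>i. if i = 0 then \<gamma> else - \<i> * \<omega>)"
proof -
  define D where "D = complex_of_real (- 4 * \<omega>^2 - \<alpha> * \<gamma>)"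
  have "D \<noteq> 0"
    using assms(3) unfolding D_def by (simp only: of_real_eq_0_iff)
  then show ?thesis
    unfolding N_def lyap_numerator_def csolve_antidiag[OF assms(1,2)] csolve_shifted_antidiag
      D_def[symmetric] affine_v_bilin_def affine_v_trilin_def cinner_def sum_lessThan_2 q p
    using assms(1,2) by (simp add: field_simps power2_eq_square power3_eq_cube)
qed

lemma Re_lyap_numerator_antidiag_standard:
  fixes \<alpha> \<gamma> \<omega> f20 f11 g20 g11 f30 f21 g30 g21 :: real
  assumes "\<alpha> \<noteq> 0" "\<gamma> \<noteq> 0" "\<omega> \<noteq> 0" and \<omega>: "\<omega>^2 = - (\<alpha> * \<gamma>)"
  shows "Re (lyap_numerator (\<lambda>i j. of_real (antidiag \<alpha> \<gamma> i j)) \<omega>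
               (affine_v_bilin f20 f11 g20 g11) (affine_v_trilin f30 f21 g30 g21)
               (\<lambda>i. if i = 0 then \<alpha> else \<i> * \<omega>) (\<lambda>i. if i = 0 then \<gamma> else - \<i> * \<omega>))
       = \<alpha>^2 * (\<alpha>*\<gamma>*f30 - \<alpha>*f20*g20 - \<gamma>*f11*f20 + \<alpha>*(\<gamma>*g21 - g11*g20))"
proof -
  have D: "- 4 * \<omega>^2 - \<alpha> * \<gamma> = 3 * (\<alpha> * \<gamma>)" using \<omega> by simp
  have dv: "z / complex_of_real r = complex_of_real (1/r) * z" for z r
    by (simp add: divide_complex_def mult.commute)
  show ?thesis
    unfolding lyap_numerator_def csolve_antidiag[OF assms(1,2)] csolve_shifted_antidiag D
      affine_v_bilin_def affine_v_trilin_def cinner_def sum_lessThan_2 dv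
    apply simp
    using assms apply (simp add: field_simps)
    using \<omega> apply algebra
    done
qed

lemma antidiag_normalised_eigenpair_exists:
  assumes "\<alpha> * \<gamma> < 0"
  shows "\<exists>q p. normalised_eigenpair (\<lambda>i j. of_real (antidiag \<alpha> \<gamma> i j)) (sqrt (- (\<alpha> * \<gamma>))) q p"
proof -
  define \<omega> where "\<omega> = sqrt (- (\<alpha> * \<gamma>))"
  have \<omega>2: "\<omega>^2 = - (\<alpha> * \<gamma>)" unfolding \<omega>_def using assms by simp
  define s where "s = 1 / sqrt (\<alpha>^2 + \<omega>^2)"
  have "\<alpha> \<noteq> 0" "\<gamma> \<noteq> 0" using assms by auto
  then have pos: "\<alpha>^2 + \<omega>^2 > 0" by (simp add: add_pos_nonneg)
  then have s2: "s^2 * (\<alpha>^2 + \<omega>^2) = 1" "s \<noteq> 0" unfolding s_def by (auto simp: power_divide)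
  define q where "q = (\<lambda>i::nat. of_real s * (if i = 0 then of_real \<alpha> else \<i> * of_real \<omega>))"
  define p where "p = (\<lambda>i::nat. of_real (1 / (2 * \<alpha> * \<gamma> * s)) * (if i = 0 then of_real \<gamma> else - \<i> * of_real \<omega>))"
  have "normalised_eigenpair (\<lambda>i j. of_real (antidiag \<alpha> \<gamma> i j)) \<omega> q p"
    unfolding normalised_eigenpair_def cmatvec_def cinner_def antidiag_def sum_lessThan_2 q_def p_def fun_eq_iff
    using s2 \<open>\<alpha> \<noteq> 0\<close> \<open>\<gamma> \<noteq> 0\<close> \<omega>2
    by (simp add: complex_eq_iff field_simps power2_eq_square) (simp add: mult.assoc[symmetric])
  then show ?thesis unfolding \<omega>_def by blast
qed

lemma antidiag_normalised_eigenpair_coords: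
  assumes "\<alpha> * \<gamma> < 0"
    and E: "normalised_eigenpair (\<lambda>i j. of_real (antidiag \<alpha> \<gamma> i j)) \<omega> q p"
    and \<omega>_def: "\<omega> = sqrt (- (\<alpha> * \<gamma>))"
  shows "q 1 = \<i> * \<omega> * q 0 / \<alpha>" "p 1 = - \<i> * \<omega> * p 0 / \<gamma>"
    and "cnj (q 0) * q 0 = \<alpha>^2 / (\<alpha>^2 - \<alpha> * \<gamma>)" "cnj (p 0) * q 0 = 1 / 2"
proof -
  have \<omega>2: "\<omega>^2 = - (\<alpha> * \<gamma>)" unfolding \<omega>_def using assms(1) by simp
  have ne: "\<alpha> \<noteq> 0" "\<gamma> \<noteq> 0" using assms(1) by auto
  have "\<alpha>^2 > 0" using ne by simp
  then have pos: "\<alpha>^2 - \<alpha> * \<gamma> > 0" using assms(1) by linarith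
  note E = E[unfolded normalised_eigenpair_def]
  show q1: "q 1 = \<i> * \<omega> * q 0 / \<alpha>"
    using fun_cong[OF conjunct1[OF E], of 0] ne
    by (simp add: cmatvec_def antidiag_def sum_lessThan_2 field_simps)
  show p1: "p 1 = - \<i> * \<omega> * p 0 / \<gamma>"
    using fun_cong[OF conjunct1[OF conjunct2[OF E]], of 0] ne
    by (simp add: cmatvec_def antidiag_def sum_lessThan_2 field_simps)
  have r: "\<omega>^2 / \<alpha>^2 = - \<gamma> / \<alpha>" "- (\<omega>^2) / (\<alpha> * \<gamma>) = 1"
    using ne unfolding \<omega>2 by (simp_all add: field_simps power2_eq_square)
  have "cnj (q 1) * q 1 = of_real (\<omega>^2 / \<alpha>^2) * (cnj (q 0) * q 0)"
       "cnj (p 1) * q 1 = of_real (- (\<omega>^2) / (\<alpha> * \<gamma>)) * (cnj (p 0) * q 0)"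
    unfolding q1 p1 by (simp_all add: field_simps power2_eq_square)
  note q1q1 = this(1)[unfolded r(1)] and p1q1 = this(2)[unfolded r(2) of_real_1 mult_1_left]
  have "cnj (q 0) * q 0 + cnj (q 1) * q 1 = 1" "cnj (p 0) * q 0 + cnj (p 1) * q 1 = 1"
    using E unfolding cinner_def sum_lessThan_2 by simp_all
  then have qq0: "cnj (q 0) * q 0 * (1 + of_real (- \<gamma> / \<alpha>)) = 1" and pq0: "cnj (p 0) * q 0 * 2 = 1"
    unfolding q1q1 p1q1 by (simp_all add: algebra_simps)
  show "cnj (p 0) * q 0 = 1 / 2"
    using pq0 by (simp add: field_simps)
  have "1 + - \<gamma> / \<alpha> = (\<alpha>^2 - \<alpha> * \<gamma>) / \<alpha>^2" using ne by (simp add: field_simps power2_eq_square)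
  then have "cnj (q 0) * q 0 * of_real ((\<alpha>^2 - \<alpha> * \<gamma>) / \<alpha>^2) = 1"
    using qq0 by (metis of_real_1 of_real_add)
  moreover have "(\<alpha>^2 - \<alpha> * \<gamma>) / \<alpha>^2 \<noteq> 0" using pos ne by simp
  ultimately have "cnj (q 0) * q 0 = 1 / of_real ((\<alpha>^2 - \<alpha> * \<gamma>) / \<alpha>^2)"
    by (simp add: eq_divide_eq del: of_real_divide)
  then show "cnj (q 0) * q 0 = \<alpha>^2 / (\<alpha>^2 - \<alpha> * \<gamma>)" by simp
qed

lemma Re_lyap_numerator_antidiag:
  fixes \<alpha> \<gamma> f20 f11 g20 g11 f30 f21 g30 g21 :: real
  assumes "\<alpha> * \<gamma> < 0"
    and qp: "normalised_eigenpair (\<lambda>i j. of_real (antidiag \<alpha> \<gamma> i j)) (sqrt (- (\<alpha> * \<gamma>))) q p"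
  shows "Re (lyap_numerator (\<lambda>i j. of_real (antidiag \<alpha> \<gamma> i j)) (sqrt (- (\<alpha> * \<gamma>)))
               (affine_v_bilin f20 f11 g20 g11) (affine_v_trilin f30 f21 g30 g21) q p)
       = \<alpha> * (\<alpha>*\<gamma>*f30 - \<alpha>*f20*g20 - \<gamma>*f11*f20 + \<alpha>*(\<gamma>*g21 - g11*g20)) / (2 * \<gamma> * (\<alpha>^2 - \<alpha> * \<gamma>))"
proof -
  define \<omega> where "\<omega> = sqrt (- (\<alpha> * \<gamma>))"
  have \<omega>2: "\<omega>^2 = - (\<alpha> * \<gamma>)" unfolding \<omega>_def using assms by simp
  have ne: "\<alpha> \<noteq> 0" "\<gamma> \<noteq> 0" "\<omega> \<noteq> 0" using assms unfolding \<omega>_def by auto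
  note coords = antidiag_normalised_eigenpair_coords[OF assms(1) qp[folded \<omega>_def] \<omega>_def]
  have "4 * \<omega>^2 + \<alpha> * \<gamma> \<noteq> 0" unfolding \<omega>2 using assms(1) by linarith
  note hom = lyap_numerator_antidiag_homogeneous[OF ne(1,2) this coords(1,2)]
  have "cnj (p 0) * q 0 ^ 2 * cnj (q 0) = (cnj (p 0) * q 0) * (cnj (q 0) * q 0)"
    by (simp add: power2_eq_square)
  then have k: "cnj (p 0) * q 0 ^ 2 * cnj (q 0) / of_real (\<gamma> * \<alpha>^3)
      = of_real (\<alpha>^2 / (2 * \<gamma> * \<alpha>^3 * (\<alpha>^2 - \<alpha> * \<gamma>)))"
    unfolding coords(3,4) by simp
  have "Re (lyap_numerator (\<lambda>i j. of_real (antidiag \<alpha> \<gamma> i j)) \<omega>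
               (affine_v_bilin f20 f11 g20 g11) (affine_v_trilin f30 f21 g30 g21) q p)
      = \<alpha>^2 / (2 * \<gamma> * \<alpha>^3 * (\<alpha>^2 - \<alpha> * \<gamma>)) *
        (\<alpha>^2 * (\<alpha>*\<gamma>*f30 - \<alpha>*f20*g20 - \<gamma>*f11*f20 + \<alpha>*(\<gamma>*g21 - g11*g20)))"
    unfolding hom k using Re_lyap_numerator_antidiag_standard[OF ne \<omega>2] by simp
  also have "\<dots> = \<alpha> * (\<alpha>*\<gamma>*f30 - \<alpha>*f20*g20 - \<gamma>*f11*f20 + \<alpha>*(\<gamma>*g21 - g11*g20)) / (2 * \<gamma> * (\<alpha>^2 - \<alpha> * \<gamma>))"
  proof -
    have "\<alpha>^2 / (2 * \<gamma> * \<alpha>^3 * D) * (\<alpha>^2 * M) = \<alpha> * M / (2 * \<gamma> * D)" for M D :: real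
      using ne by (cases "D = 0") (simp_all add: field_simps power2_eq_square power3_eq_cube)
    then show ?thesis .
  qed
  finally show ?thesis unfolding \<omega>_def .
qed

lemma lyap1_antidiag:
  assumes J: "jac F x = antidiag \<alpha> \<gamma>" and "\<alpha> * \<gamma> < 0"
    and "Bform F x = affine_v_bilin f20 f11 g20 g11" and "Cform F x = affine_v_trilin f30 f21 g30 g21"
  shows "lyap1 F x = \<alpha> * (\<alpha>*\<gamma>*f30 - \<alpha>*f20*g20 - \<gamma>*f11*f20 + \<alpha>*(\<gamma>*g21 - g11*g20))
                       / (4 * \<gamma> * (\<alpha>^2 - \<alpha> * \<gamma>) * sqrt (- (\<alpha> * \<gamma>)))"
proof -
  have \<omega>: "hopf_freq F x = sqrt (- (\<alpha> * \<gamma>))"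
    unfolding hopf_freq_def jdet_def J antidiag_def by simp
  have "lyap1 F x = \<alpha> * (\<alpha>*\<gamma>*f30 - \<alpha>*f20*g20 - \<gamma>*f11*f20 + \<alpha>*(\<gamma>*g21 - g11*g20))
                       / (2 * \<gamma> * (\<alpha>^2 - \<alpha> * \<gamma>)) / (2 * hopf_freq F x)"
  proof (rule lyap1_eqI)
    show "\<exists>q p. normalised_eigenpair (\<lambda>i j. of_real (jac F x i j)) (hopf_freq F x) q p"
      unfolding \<omega> J using antidiag_normalised_eigenpair_exists[OF assms(2)] .
  next
    fix q p
    assume "normalised_eigenpair (\<lambda>i j. of_real (jac F x i j)) (hopf_freq F x) q p"
    then show "Re (lyap_numerator (\<lambda>i j. of_real (jac F x i j)) (hopf_freq F x) (Bform F x) (Cform F x) q p)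
        = \<alpha> * (\<alpha>*\<gamma>*f30 - \<alpha>*f20*g20 - \<gamma>*f11*f20 + \<alpha>*(\<gamma>*g21 - g11*g20)) / (2 * \<gamma> * (\<alpha>^2 - \<alpha> * \<gamma>))"
      unfolding \<omega> J assms(3,4) by (rule Re_lyap_numerator_antidiag[OF assms(2)])
  qed
  then show ?thesis unfolding \<omega> by simp
qed

section \<open>Planar fields affine in the second variable\<close>

definition affine_v :: "real poly \<Rightarrow> real poly \<Rightarrow> real \<Rightarrow> real \<Rightarrow> real" where
  "affine_v P Q u v = poly P u + poly Q u * v"

definition affine_field ::
    "real poly \<Rightarrow> real poly \<Rightarrow> real poly \<Rightarrow> real poly \<Rightarrow> real \<Rightarrow> real \<Rightarrow> real \<times> real" where
  "affine_field P Q R S u v = (affine_v P Q u v, affine_v R S u v)"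

lemma pd_affine_v:
  "pd j (affine_v P Q) = (if j = 0 then affine_v (pderiv P) (pderiv Q) else affine_v Q 0)"
proof -
  have "((\<lambda>x. affine_v P Q x v) has_real_derivative affine_v (pderiv P) (pderiv Q) u v) (at u)"
       "((\<lambda>y. affine_v P Q u y) has_real_derivative affine_v Q 0 u v) (at v)" for u v
    unfolding affine_v_def by (auto intro!: derivative_eq_intros poly_DERIV[THEN DERIV_cong])
  then show ?thesis
    unfolding pd_def by (simp add: DERIV_imp_deriv fun_eq_iff)
qed

lemma pdn_affine_v:
  "pdn i j (affine_v P Q) =
     affine_v ((pderiv ^^ i) (if j = 0 then P else if j = 1 then Q else 0))
              ((pderiv ^^ i) (if j = 0 then Q else 0))"
proof -
  have v: "(pd 1 ^^ j) (affine_v P Q) =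
      affine_v (if j = 0 then P else if j = 1 then Q else 0) (if j = 0 then Q else 0)"
    by (induction j) (auto simp: pd_affine_v)
  have u: "(pd 0 ^^ i) (affine_v A B) = affine_v ((pderiv ^^ i) A) ((pderiv ^^ i) B)" for A B
    by (induction i) (auto simp: pd_affine_v)
  show ?thesis unfolding pdn_def v u ..
qed

lemma comp_affine_field: "comp (affine_field P Q R S) i = (if i = 0 then affine_v P Q else affine_v R S)"
  by (simp add: comp_def affine_field_def fun_eq_iff)

lemma jac_affine_field:
  "jac (affine_field P Q R S) (u, v) = (\<lambda>i j.
     if i = 0 then (if j = 0 then pdn 1 0 (affine_v P Q) u v else pdn 0 1 (affine_v P Q) u v)
     else (if j = 0 then pdn 1 0 (affine_v R S) u v else pdn 0 1 (affine_v R S) u v))"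
  by (simp add: jac_def comp_affine_field pd_affine_v pdn_affine_v fun_eq_iff)

lemma Bform_affine_field:
  "Bform (affine_field P Q R S) (u, v) =
     affine_v_bilin (pdn 2 0 (affine_v P Q) u v) (pdn 1 1 (affine_v P Q) u v)
                    (pdn 2 0 (affine_v R S) u v) (pdn 1 1 (affine_v R S) u v)"
  by (simp add: Bform_def affine_v_bilin_def sum_lessThan_2 comp_affine_field pd_affine_v pdn_affine_v
      numeral_2_eq_2 fun_eq_iff) (simp add: affine_v_def algebra_simps)

lemma Cform_affine_field:
  "Cform (affine_field P Q R S) (u, v) =
     affine_v_trilin (pdn 3 0 (affine_v P Q) u v) (pdn 2 1 (affine_v P Q) u v)
                     (pdn 3 0 (affine_v R S) u v) (pdn 2 1 (affine_v R S) u v)"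
  by (simp add: Cform_def affine_v_trilin_def sum_lessThan_2 comp_affine_field pd_affine_v pdn_affine_v
      numeral_2_eq_2 numeral_3_eq_3 fun_eq_iff) (simp add: affine_v_def algebra_simps)

lemma pdn_affine_v_0_smult: "pdn i j (affine_v 0 (smult a Q)) u v = a * pdn i j (affine_v 0 Q) u v"
proof -
  have "(pderiv ^^ n) (smult a Q) = smult a ((pderiv ^^ n) Q)" for n Q
    by (induction n) (simp_all add: pderiv_smult)
  moreover have "(pderiv ^^ n) 0 = (0 :: real poly)" for n
    by (induction n) simp_all
  ultimately show ?thesis
    by (simp add: pdn_affine_v affine_v_def)
qed

(* For g = S(u) v: b10 b21 = b11 b20, which cancels the g21 and g11 terms of l1. *)
lemma pdn_affine_v_0_cross:
  "pdn 1 0 (affine_v 0 S) u v * pdn 2 1 (affine_v 0 S) u v =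
   pdn 1 1 (affine_v 0 S) u v * pdn 2 0 (affine_v 0 S) u v"
  by (simp add: pdn_affine_v affine_v_def numeral_2_eq_2)

section \<open>The predator-prey field\<close>

definition growth_poly :: "real \<Rightarrow> real \<Rightarrow> real poly" where
  "growth_poly \<theta> \<eta> = [:0, 1:] * [:1, -1:] * [:\<theta>, 1:] * [:\<eta>, 0, 1:]"

lemma fm_affine_v: "fm \<theta> \<eta> = affine_v (growth_poly \<theta> \<eta>) [:0, 0, -1:]"
  by (simp add: fun_eq_iff fm_def affine_v_def growth_poly_def algebra_simps power2_eq_square)

lemma gm_affine_v: "(\<lambda>u v. gm \<eta> u v \<delta>) = affine_v 0 [:- \<delta> * \<eta>, 0, 1 - \<delta>:]"
  by (simp add: fun_eq_iff gm_def affine_v_def algebra_simps power2_eq_square)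

lemma field_affine_field:
  "field \<theta> \<eta> \<epsilon> \<delta> = affine_field (growth_poly \<theta> \<eta>) [:0, 0, -1:] 0 (smult \<epsilon> [:- \<delta> * \<eta>, 0, 1 - \<delta>:])"
  by (simp add: fun_eq_iff field_def affine_field_def fm_affine_v gm_def affine_v_def
      algebra_simps power2_eq_square)

lemma phi_eq_growth_poly: "phi \<theta> \<eta> u = poly (growth_poly \<theta> \<eta>) u / u^2"
  by (cases "u = 0") (simp_all add: phi_def growth_poly_def field_simps power2_eq_square)

lemma jac_field:
  "jac (field \<theta> \<eta> \<epsilon> \<delta>) (u, v) = (\<lambda>i j.
     if i = 0 then (if j = 0 then pdn 1 0 (fm \<theta> \<eta>) u v else pdn 0 1 (fm \<theta> \<eta>) u v)
     else \<epsilon> * (if j = 0 then pdn 1 0 (\<lambda>u v. gm \<eta> u v \<delta>) u v else pdn 0 1 (\<lambda>u v. gm \<eta> u v \<delta>) u v))"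
  unfolding field_affine_field jac_affine_field fm_affine_v gm_affine_v pdn_affine_v_0_smult
  by (simp add: fun_eq_iff)

lemma Bform_field:
  "Bform (field \<theta> \<eta> \<epsilon> \<delta>) (u, v) =
     affine_v_bilin (pdn 2 0 (fm \<theta> \<eta>) u v) (pdn 1 1 (fm \<theta> \<eta>) u v)
       (\<epsilon> * pdn 2 0 (\<lambda>u v. gm \<eta> u v \<delta>) u v) (\<epsilon> * pdn 1 1 (\<lambda>u v. gm \<eta> u v \<delta>) u v)"
  unfolding field_affine_field Bform_affine_field fm_affine_v gm_affine_v pdn_affine_v_0_smult ..

lemma Cform_field:
  "Cform (field \<theta> \<eta> \<epsilon> \<delta>) (u, v) =
     affine_v_trilin (pdn 3 0 (fm \<theta> \<eta>) u v) (pdn 2 1 (fm \<theta> \<eta>) u v)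
       (\<epsilon> * pdn 3 0 (\<lambda>u v. gm \<eta> u v \<delta>) u v) (\<epsilon> * pdn 2 1 (\<lambda>u v. gm \<eta> u v \<delta>) u v)"
  unfolding field_affine_field Cform_affine_field fm_affine_v gm_affine_v pdn_affine_v_0_smult ..

lemma pdn_gm:
  "pdn 0 1 (\<lambda>u v. gm \<eta> u v \<delta>) u v = (1 - \<delta>) * u^2 - \<delta> * \<eta>"
  "pdn 1 0 (\<lambda>u v. gm \<eta> u v \<delta>) u v = 2 * (1 - \<delta>) * u * v"
  by (simp_all add: gm_affine_v pdn_affine_v affine_v_def pderiv_pCons algebra_simps power2_eq_square)

(* u^2 \<phi>'(u): its nonzero roots are the fold points of M20. *)
definition fold_quartic :: "real \<Rightarrow> real \<Rightarrow> real \<Rightarrow> real" where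
  "fold_quartic \<theta> \<eta> u = -3 * u^4 + 2 * (1 - \<theta>) * u^3 + (\<theta> - \<eta>) * u^2 - \<theta> * \<eta>"

lemma pdn_fm:
  "pdn 0 1 (fm \<theta> \<eta>) u v = - (u^2)"
  "pdn 1 0 (fm \<theta> \<eta>) u v = poly (pderiv (growth_poly \<theta> \<eta>)) u - 2 * u * v"
  "pdn 2 0 (fm \<theta> \<eta>) u v = poly (pderiv (pderiv (growth_poly \<theta> \<eta>))) u - 2 * v"
  by (simp_all add: fm_affine_v pdn_affine_v affine_v_def pderiv_pCons numeral_2_eq_2 power2_eq_square)

lemma fm_u_on_critical_manifold:
  assumes "u \<noteq> 0"
  shows "pdn 1 0 (fm \<theta> \<eta>) u (phi \<theta> \<eta> u) = fold_quartic \<theta> \<eta> u"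
  unfolding pdn_fm phi_eq_growth_poly using assms
  by (simp add: fold_quartic_def growth_poly_def pderiv_mult pderiv_pCons field_simps eval_nat_numeral)

lemma fold_quartic_neg_of_gt_1:
  assumes "u > 1" "\<theta> > 0" "\<eta> > 0"
  shows "fold_quartic \<theta> \<eta> u < 0"
proof -
  have "u^3 * (3 * u - 2) > 0" "\<theta> * u^2 * (2 * u - 1) > 0" "\<eta> * u^2 \<ge> 0" "\<theta> * \<eta> > 0"
    using assms by (auto intro!: mult_pos_pos)
  moreover have "fold_quartic \<theta> \<eta> u = - (u^3 * (3 * u - 2)) - \<theta> * u^2 * (2 * u - 1) - \<eta> * u^2 - \<theta> * \<eta>"
    by (simp add: fold_quartic_def algebra_simps eval_nat_numeral)
  ultimately show ?thesis by linarith
qed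

lemma fold_quartic_neg_of_lt_neg:
  assumes "u < - \<theta>" "\<theta> > 0" "\<eta> > 0"
  shows "fold_quartic \<theta> \<eta> u < 0"
proof -
  define x where "x = - u"
  have x: "x > \<theta>" "x > 0" using assms unfolding x_def by auto
  then have "x^4 > 0" "x^3 > 0" "x^3 * (x - \<theta>) > 0" "x^2 * (x - \<theta>) > 0" "\<eta> * x^2 \<ge> 0" "\<theta> * \<eta> > 0"
    using assms by (auto intro!: mult_pos_pos)
  moreover have "fold_quartic \<theta> \<eta> u = - (x^4) - x^3 - 2 * (x^3 * (x - \<theta>)) - x^2 * (x - \<theta>) - \<eta> * x^2 - \<theta> * \<eta>"
    unfolding x_def by (simp add: fold_quartic_def algebra_simps eval_nat_numeral)
  ultimately show ?thesis by linarith
qed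

(* Chain rule along M20, using f_uv = -2u and u^2 \<phi>' = fold_quartic. *)
lemma fold_quartic_deriv:
  assumes "u \<noteq> 0"
  shows "(fold_quartic \<theta> \<eta> has_real_derivative
           pdn 2 0 (fm \<theta> \<eta>) u (phi \<theta> \<eta> u) - 2 * fold_quartic \<theta> \<eta> u / u) (at u)"
proof -
  have "(fold_quartic \<theta> \<eta> has_real_derivative -12 * u^3 + 6 * (1 - \<theta>) * u^2 + 2 * (\<theta> - \<eta>) * u) (at u)"
    unfolding fold_quartic_def by (auto intro!: derivative_eq_intros simp: eval_nat_numeral algebra_simps)
  moreover have "-12 * u^3 + 6 * (1 - \<theta>) * u^2 + 2 * (\<theta> - \<eta>) * u
      = pdn 2 0 (fm \<theta> \<eta>) u (phi \<theta> \<eta> u) - 2 * fold_quartic \<theta> \<eta> u / u"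
    unfolding pdn_fm phi_eq_growth_poly using assms
    by (simp add: fold_quartic_def growth_poly_def pderiv_mult pderiv_pCons field_simps eval_nat_numeral)
  ultimately show ?thesis by simp
qed

lemma field_on_critical_manifold:
  assumes "u \<noteq> 0" "(1 - \<delta>) * u^2 = \<delta> * \<eta>"
  shows "field \<theta> \<eta> \<epsilon> \<delta> u (phi \<theta> \<eta> u) = (0, 0)"
    and "jtrace (field \<theta> \<eta> \<epsilon> \<delta>) (u, phi \<theta> \<eta> u) = fold_quartic \<theta> \<eta> u"
proof -
  have "fm \<theta> \<eta> u (phi \<theta> \<eta> u) = 0"
    using assms(1) by (simp add: fm_def phi_def field_simps power2_eq_square)
  moreover have "gm \<eta> u (phi \<theta> \<eta> u) \<delta> = phi \<theta> \<eta> u * ((1 - \<delta>) * u^2 - \<delta> * \<eta>)"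
    by (simp add: gm_def algebra_simps)
  ultimately show "field \<theta> \<eta> \<epsilon> \<delta> u (phi \<theta> \<eta> u) = (0, 0)"
    using assms(2) by (simp add: field_def)
  show "jtrace (field \<theta> \<eta> \<epsilon> \<delta>) (u, phi \<theta> \<eta> u) = fold_quartic \<theta> \<eta> u"
    unfolding jtrace_def jac_field pdn_gm fm_u_on_critical_manifold[OF assms(1)] using assms(2) by simp
qed

section \<open>The singular Hopf bifurcation at the lower fold\<close>

(* Only these hypotheses of theorem1 are needed: f and g vanish at the fold by construction,
   a01 = -u_m^2 and dg/d\<delta> = -v_m (u_m^2 + \<eta>) are nonzero automatically, and R only ensures
   that the fold exists. *)
locale fold_hopf =
  fixes \<theta> \<eta> :: real
  assumes eta_pos: "\<eta> > 0" and theta_pos: "\<theta> > 0"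
    and a10_zero: "acoef \<theta> \<eta> 1 0 = 0" and a20_nonzero: "acoef \<theta> \<eta> 2 0 \<noteq> 0"
    and b10_nonzero: "bcoef \<theta> \<eta> 1 0 \<noteq> 0"
begin

abbreviation "um \<equiv> u_m \<theta> \<eta>"
abbreviation "vm \<equiv> v_m \<theta> \<eta>"
abbreviation "ds \<equiv> delta_star \<theta> \<eta>"

lemma um_nonzero: "um \<noteq> 0"
proof
  assume "um = 0"
  then have "acoef \<theta> \<eta> 1 0 = \<theta> * \<eta>"
    unfolding acoef_def pdn_fm by (simp add: growth_poly_def pderiv_mult pderiv_pCons)
  with a10_zero eta_pos theta_pos show False by simp
qed

lemma fold_quartic_um: "fold_quartic \<theta> \<eta> um = 0"
  using a10_zero fm_u_on_critical_manifold[OF um_nonzero] by (simp add: acoef_def v_m_def)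

lemma um_vm_pos: "um * vm > 0"
proof -
  have k: "um * vm = (1 - um) * (um + \<theta>) * (um^2 + \<eta>)"
    using um_nonzero by (simp add: v_m_def phi_def)
  have "vm \<noteq> 0"
    using b10_nonzero unfolding bcoef_def pdn_gm by auto
  then have "um \<noteq> 1" "um \<noteq> - \<theta>"
    using k um_nonzero by auto
  moreover note fold_quartic_um
  ultimately have "- \<theta> < um" "um < 1"
    using fold_quartic_neg_of_gt_1[of um \<theta> \<eta>] fold_quartic_neg_of_lt_neg[of um \<theta> \<eta>] theta_pos eta_pos
    by force+
  then show ?thesis
    unfolding k using eta_pos by (intro mult_pos_pos) (auto intro: add_nonneg_pos)
qed

lemma ds_bounds: "0 < ds" "ds < 1"
  using um_nonzero eta_pos by (simp_all add: delta_star_def add_pos_pos)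

lemma ds_equilibrium: "(1 - ds) * um^2 = ds * \<eta>"
proof -
  have "um^2 + \<eta> > 0" using um_nonzero eta_pos by (simp add: add_pos_pos)
  then show ?thesis by (simp add: delta_star_def field_simps)
qed

lemma b10_pos: "bcoef \<theta> \<eta> 1 0 > 0"
  unfolding bcoef_def pdn_gm using um_vm_pos ds_bounds by (simp add: mult.assoc)

(* The paper's u_* = sqrt(\<delta> \<eta> / (1 - \<delta>)), with the sign of u_m: u_m is a THE-description
   known only through a10 = 0, so its sign is not fixed in advance. *)
definition branch_u :: "real \<Rightarrow> real" where
  "branch_u \<delta> = sgn um * sqrt (\<delta> * \<eta> / (1 - \<delta>))"

definition branch :: "real \<Rightarrow> real \<times> real" where
  "branch \<delta> = (branch_u \<delta>, phi \<theta> \<eta> (branch_u \<delta>))"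

lemma branch_u_equilibrium:
  assumes "0 < \<delta>" "\<delta> < 1"
  shows "branch_u \<delta> \<noteq> 0" "(1 - \<delta>) * (branch_u \<delta>)^2 = \<delta> * \<eta>"
proof -
  have "\<delta> * \<eta> / (1 - \<delta>) > 0" using assms eta_pos by simp
  then show "branch_u \<delta> \<noteq> 0" "(1 - \<delta>) * (branch_u \<delta>)^2 = \<delta> * \<eta>"
    unfolding branch_u_def using um_nonzero assms eta_pos by (simp_all add: power_mult_distrib sgn_if)
qed

lemma sqrt_ds_ratio: "sqrt (ds * \<eta> / (1 - ds)) = \<bar>um\<bar>"
proof -
  have "ds * \<eta> / (1 - ds) = um^2"
    using ds_equilibrium ds_bounds by (simp add: field_simps)
  then show ?thesis by simp
qed

lemma field_branch:
  assumes "0 < \<delta>" "\<delta> < 1"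
  shows "field \<theta> \<eta> \<epsilon> \<delta> (fst (branch \<delta>)) (snd (branch \<delta>)) = (0, 0)"
  unfolding branch_def using field_on_critical_manifold(1) branch_u_equilibrium[OF assms] by simp

lemma branch_u_ds: "branch_u ds = um"
  unfolding branch_u_def sqrt_ds_ratio by (simp add: sgn_mult_abs)

lemma branch_ds: "branch ds = (um, vm)"
  by (simp add: branch_def branch_u_ds v_m_def)

lemma isCont_branch: "isCont branch ds"
proof -
  have "isCont branch_u ds"
    unfolding branch_u_def using ds_bounds by (intro continuous_intros) auto
  moreover have "isCont (\<lambda>u. phi \<theta> \<eta> u) (branch_u ds)"
    unfolding phi_def branch_u_ds using um_nonzero by (intro continuous_intros) auto
  ultimately have "isCont (\<lambda>\<delta>. phi \<theta> \<eta> (branch_u \<delta>)) ds"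
    by (rule isCont_o2)
  with \<open>isCont branch_u ds\<close> show ?thesis
    unfolding branch_def by (intro continuous_Pair)
qed

lemma branch_u_deriv: "(branch_u has_real_derivative \<eta> / (2 * (1 - ds)^2 * um)) (at ds)"
proof -
  have "(branch_u has_real_derivative
          sgn um * (inverse (sqrt (ds * \<eta> / (1 - ds))) / 2 * (\<eta> / (1 - ds)^2))) (at ds)"
    unfolding branch_u_def using ds_bounds mult_pos_pos[OF ds_bounds(1) eta_pos]
    by (auto intro!: derivative_eq_intros simp: field_simps power2_eq_square)
  moreover have "sgn um * (inverse \<bar>um\<bar> / 2 * (\<eta> / (1 - ds)^2)) = \<eta> / (2 * (1 - ds)^2 * um)"
    using um_nonzero by (simp add: sgn_if field_simps)
  ultimately show ?thesis unfolding sqrt_ds_ratio by simp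
qed

lemma tendsto_branch: "((\<lambda>(\<epsilon>, \<delta>). branch \<delta>) \<longlongrightarrow> (um, vm)) (at (0, ds) within S)"
proof -
  have "(snd \<longlongrightarrow> ds) (at (0, ds) within S)"
    using tendsto_snd[OF tendsto_ident_at[of "(0, ds)" S]] by simp
  from isCont_tendsto_compose[OF isCont_branch this] show ?thesis
    by (simp add: branch_ds case_prod_beta')
qed

lemma jtrace_branch:
  assumes "0 < \<delta>" "\<delta> < 1"
  shows "jtrace (field \<theta> \<eta> \<epsilon> \<delta>) (branch \<delta>) = fold_quartic \<theta> \<eta> (branch_u \<delta>)"
  unfolding branch_def using field_on_critical_manifold(2) branch_u_equilibrium[OF assms] by blast

lemma jtrace_branch_deriv:
  "((\<lambda>\<delta>. jtrace (field \<theta> \<eta> \<epsilon> \<delta>) (branch \<delta>)) has_real_derivative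
      acoef \<theta> \<eta> 2 0 * (\<eta> / (2 * (1 - ds)^2 * um))) (at ds)"
proof -
  have "(fold_quartic \<theta> \<eta> has_real_derivative acoef \<theta> \<eta> 2 0) (at (branch_u ds))"
    using fold_quartic_deriv[of um \<theta> \<eta>] um_nonzero
    by (simp add: fold_quartic_um branch_u_ds acoef_def v_m_def)
  from DERIV_chain2[OF this branch_u_deriv]
  show ?thesis
    by (rule has_field_derivative_transform_within_open[of _ _ _ "{0<..<1}"])
       (use ds_bounds jtrace_branch in auto)
qed

lemma jac_fold: "jac (field \<theta> \<eta> \<epsilon> ds) (um, vm) = antidiag (- (um^2)) (\<epsilon> * bcoef \<theta> \<eta> 1 0)"
  using a10_zero ds_equilibrium
  unfolding jac_field antidiag_def acoef_def bcoef_def pdn_fm(1) pdn_gm(1)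
  by (simp add: fun_eq_iff algebra_simps)

lemma hopf_freq_fold: "hopf_freq (field \<theta> \<eta> \<epsilon> ds) (um, vm) = sqrt (\<epsilon> * (um^2 * bcoef \<theta> \<eta> 1 0))"
  unfolding hopf_freq_def jdet_def jac_fold by (simp add: antidiag_def algebra_simps)

lemma hopf_freq_fold_tendsto_0: "((\<lambda>\<epsilon>. hopf_freq (field \<theta> \<eta> \<epsilon> ds) (um, vm)) \<longlongrightarrow> 0) (at_right 0)"
  unfolding hopf_freq_fold by (auto intro!: tendsto_eq_intros)

lemma hopf_point_fold:
  assumes "\<epsilon> > 0"
  shows "hopf_point (\<lambda>\<delta>. field \<theta> \<eta> \<epsilon> \<delta>) branch ds"
  unfolding hopf_point_def
proof (intro conjI)
  show "\<exists>r>0. \<forall>\<mu>. \<bar>\<mu> - ds\<bar> < r \<longrightarrow> field \<theta> \<eta> \<epsilon> \<mu> (fst (branch \<mu>)) (snd (branch \<mu>)) = (0, 0)"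
    using ds_bounds field_branch by (intro exI[of _ "min ds (1 - ds)"]) (auto simp: abs_less_iff)
  show "jtrace (field \<theta> \<eta> \<epsilon> ds) (branch ds) = 0"
    using jtrace_branch ds_bounds by (simp add: branch_u_ds fold_quartic_um)
  show "jdet (field \<theta> \<eta> \<epsilon> ds) (branch ds) > 0"
    using assms um_nonzero b10_pos
    by (simp add: branch_ds jdet_def jac_fold antidiag_def)
  show "\<exists>d. d \<noteq> 0 \<and> ((\<lambda>\<mu>. jtrace (field \<theta> \<eta> \<epsilon> \<mu>) (branch \<mu>)) has_real_derivative d) (at ds)"
  proof (intro exI conjI)
    show "acoef \<theta> \<eta> 2 0 * (\<eta> / (2 * (1 - ds)^2 * um)) \<noteq> 0"
      using a20_nonzero um_nonzero eta_pos ds_bounds by simp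
  qed (rule jtrace_branch_deriv)
qed

lemma lyap1_fold:
  assumes "\<epsilon> > 0"
  shows "lyap1 (field \<theta> \<eta> \<epsilon> ds) (um, vm) = Acoef \<theta> \<eta> /
           (4 * bcoef \<theta> \<eta> 1 0 * (um^2 + \<epsilon> * bcoef \<theta> \<eta> 1 0) * hopf_freq (field \<theta> \<eta> \<epsilon> ds) (um, vm))"
proof -
  have neg: "- (um^2) * (\<epsilon> * bcoef \<theta> \<eta> 1 0) < 0"
    using assms um_nonzero b10_pos by simp
  have B: "Bform (field \<theta> \<eta> \<epsilon> ds) (um, vm) = affine_v_bilin (acoef \<theta> \<eta> 2 0) (acoef \<theta> \<eta> 1 1)
      (\<epsilon> * bcoef \<theta> \<eta> 2 0) (\<epsilon> * bcoef \<theta> \<eta> 1 1)"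
    unfolding Bform_field acoef_def bcoef_def ..
  have C: "Cform (field \<theta> \<eta> \<epsilon> ds) (um, vm) = affine_v_trilin (acoef \<theta> \<eta> 3 0) (acoef \<theta> \<eta> 2 1)
      (\<epsilon> * bcoef \<theta> \<eta> 3 0) (\<epsilon> * bcoef \<theta> \<eta> 2 1)"
    unfolding Cform_field acoef_def bcoef_def ..
  note L = lyap1_antidiag[OF jac_fold neg B C]
  have cross: "bcoef \<theta> \<eta> 1 0 * bcoef \<theta> \<eta> 2 1 = bcoef \<theta> \<eta> 1 1 * bcoef \<theta> \<eta> 2 0"
    unfolding bcoef_def gm_affine_v by (rule pdn_affine_v_0_cross)
  have a01: "acoef \<theta> \<eta> 0 1 = - (um^2)"
    unfolding acoef_def pdn_fm(1) ..
  have cross0: "\<epsilon> * bcoef \<theta> \<eta> 1 0 * (\<epsilon> * bcoef \<theta> \<eta> 2 1) - \<epsilon> * bcoef \<theta> \<eta> 1 1 * (\<epsilon> * bcoef \<theta> \<eta> 2 0) = 0"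
    using cross by (simp add: algebra_simps)
  have rad: "- (- (um^2) * (\<epsilon> * bcoef \<theta> \<eta> 1 0)) = \<epsilon> * (um^2 * bcoef \<theta> \<eta> 1 0)"
    by simp
  have den: "(- (um^2))^2 - - (um^2) * (\<epsilon> * bcoef \<theta> \<eta> 1 0) = um^2 * (um^2 + \<epsilon> * bcoef \<theta> \<eta> 1 0)"
    by (simp add: algebra_simps power2_eq_square)
  have "um^2 + \<epsilon> * bcoef \<theta> \<eta> 1 0 > 0" "\<epsilon> * (um^2 * bcoef \<theta> \<eta> 1 0) > 0"
    using assms um_nonzero b10_pos by (simp_all add: add_pos_pos)
  then show ?thesis
    unfolding L hopf_freq_fold Acoef_def a01 cross0 rad den
    apply (subst frac_eq_eq)
    using assms um_nonzero b10_pos apply simp_all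
    apply (simp add: algebra_simps power2_eq_square)
    done
qed

lemma sgn_lyap1_fold:
  assumes "\<epsilon> > 0"
  shows "sgn (lyap1 (field \<theta> \<eta> \<epsilon> ds) (um, vm)) = sgn (Acoef \<theta> \<eta>)"
proof -
  have "um^2 + \<epsilon> * bcoef \<theta> \<eta> 1 0 > 0" "\<epsilon> * (um^2 * bcoef \<theta> \<eta> 1 0) > 0"
    using assms um_nonzero b10_pos by (simp_all add: add_pos_pos)
  then have "4 * bcoef \<theta> \<eta> 1 0 * (um^2 + \<epsilon> * bcoef \<theta> \<eta> 1 0) * hopf_freq (field \<theta> \<eta> \<epsilon> ds) (um, vm) > 0"
    using b10_pos by (simp add: hopf_freq_fold)
  then show ?thesis
    unfolding lyap1_fold[OF assms] by simp
qed

end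

theorem theorem1:
  fixes \<eta> \<theta> :: real
  assumes "\<eta> > 0" and "\<theta> > 0" and "(\<eta>, \<theta>) \<in> Rreg"
    and "fm \<theta> \<eta> (u_m \<theta> \<eta>) (v_m \<theta> \<eta>) = 0"
    and "gm \<eta> (u_m \<theta> \<eta>) (v_m \<theta> \<eta>) (delta_star \<theta> \<eta>) = 0"
    and "acoef \<theta> \<eta> 1 0 = 0"
    and "acoef \<theta> \<eta> 0 1 \<noteq> 0"
    and "acoef \<theta> \<eta> 2 0 \<noteq> 0"
    and "bcoef \<theta> \<eta> 1 0 \<noteq> 0"
    and "deriv (\<lambda>d. gm \<eta> (u_m \<theta> \<eta>) (v_m \<theta> \<eta>) d) (delta_star \<theta> \<eta>) \<noteq> 0"
  shows "\<exists>\<epsilon>0>0. \<exists>\<delta>0>0. \<exists>P2 :: real \<Rightarrow> real \<Rightarrow> real \<times> real. \<exists>\<delta>H :: real \<Rightarrow> real.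
     (\<forall>\<epsilon> \<delta>. 0 < \<epsilon> \<and> \<epsilon> < \<epsilon>0 \<and> \<bar>\<delta> - delta_star \<theta> \<eta>\<bar> < \<delta>0 \<longrightarrow>
         field \<theta> \<eta> \<epsilon> \<delta> (fst (P2 \<epsilon> \<delta>)) (snd (P2 \<epsilon> \<delta>)) = (0, 0)) \<and>
     ((\<lambda>(\<epsilon>, \<delta>). P2 \<epsilon> \<delta>) \<longlongrightarrow> (u_m \<theta> \<eta>, v_m \<theta> \<eta>))
         (at (0, delta_star \<theta> \<eta>) within
            {(\<epsilon>, \<delta>). 0 < \<epsilon> \<and> \<epsilon> < \<epsilon>0 \<and> \<bar>\<delta> - delta_star \<theta> \<eta>\<bar> < \<delta>0}) \<and>
     (\<lambda>\<epsilon>. \<delta>H \<epsilon> - delta_star \<theta> \<eta>) \<in> O[at_right 0](\<lambda>\<epsilon>. \<epsilon> powr (5/2)) \<and>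
     (\<forall>\<epsilon>. 0 < \<epsilon> \<and> \<epsilon> < \<epsilon>0 \<longrightarrow>
         \<bar>\<delta>H \<epsilon> - delta_star \<theta> \<eta>\<bar> < \<delta>0 \<and>
         hopf_point (\<lambda>\<delta>. field \<theta> \<eta> \<epsilon> \<delta>) (\<lambda>\<delta>. P2 \<epsilon> \<delta>) (\<delta>H \<epsilon>) \<and>
         (Acoef \<theta> \<eta> \<noteq> 0 \<longrightarrow> lyap1 (field \<theta> \<eta> \<epsilon> (\<delta>H \<epsilon>)) (P2 \<epsilon> (\<delta>H \<epsilon>)) \<noteq> 0) \<and>
         (Acoef \<theta> \<eta> < 0 \<longrightarrow> lyap1 (field \<theta> \<eta> \<epsilon> (\<delta>H \<epsilon>)) (P2 \<epsilon> (\<delta>H \<epsilon>)) < 0) \<and>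
         (Acoef \<theta> \<eta> > 0 \<longrightarrow> lyap1 (field \<theta> \<eta> \<epsilon> (\<delta>H \<epsilon>)) (P2 \<epsilon> (\<delta>H \<epsilon>)) > 0)) \<and>
     ((\<lambda>\<epsilon>. hopf_freq (field \<theta> \<eta> \<epsilon> (\<delta>H \<epsilon>)) (P2 \<epsilon> (\<delta>H \<epsilon>))) \<longlongrightarrow> 0) (at_right 0)"
proof -
  interpret fold_hopf \<theta> \<eta>
    using assms(1,2,6,8,9) by unfold_locales
  define \<delta>0 where "\<delta>0 = min ds (1 - ds)"
  have \<delta>0: "\<delta>0 > 0" "\<And>\<delta>. \<bar>\<delta> - ds\<bar> < \<delta>0 \<Longrightarrow> 0 < \<delta> \<and> \<delta> < 1"
    using ds_bounds by (auto simp: \<delta>0_def abs_less_iff)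
  have sign: "(Acoef \<theta> \<eta> \<noteq> 0 \<longrightarrow> lyap1 (field \<theta> \<eta> \<epsilon> ds) (um, vm) \<noteq> 0) \<and>
      (Acoef \<theta> \<eta> < 0 \<longrightarrow> lyap1 (field \<theta> \<eta> \<epsilon> ds) (um, vm) < 0) \<and>
      (Acoef \<theta> \<eta> > 0 \<longrightarrow> lyap1 (field \<theta> \<eta> \<epsilon> ds) (um, vm) > 0)" if "\<epsilon> > 0" for \<epsilon>
    using sgn_lyap1_fold[OF that] by (metis sgn_0_0 sgn_greater sgn_less)
  (* No constraint on \<epsilon> is needed, and \<delta>_H is the constant \<delta>*. *)
  show ?thesis
    apply (rule exI[of _ 1], rule conjI, simp)
    apply (rule exI[of _ \<delta>0], rule conjI, rule \<delta>0(1))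
    apply (rule exI[of _ "\<lambda>_. branch"], rule exI[of _ "\<lambda>_. ds"])
    using \<delta>0 field_branch tendsto_branch hopf_point_fold sign hopf_freq_fold_tendsto_0
    by (auto simp: branch_ds)
qed

end
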